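(* Let $q_1=\dfrac{\rho\varepsilon}{1-\rho(1-\varepsilon)}$, $q_2=(1-\varepsilon)^{I-1}$, and let $\bar\varepsilon\in(0,1)$ be the unique value of $\varepsilon$ with $q_1=q_2$. If $\varepsilon\ge\bar\varepsilon$ then for every information tree $\mathcal T$: $C^p_{\mathcal T}(G)=\Omega$ if $p\le q_1$ and $C^p_{\mathcal T}(G)=\varnothing$ if $p>q_1$.
   Context: Model. Fix an integer $I\ge2$, agents $\mathcal I=\{1,\dots,I\}$, a prior $\rho\in(0,1)$ and a loss probability $\varepsilon\in(0,1)$. A state of nature $\theta\in\{g,b\}$ has $\Pr(\theta=g)=\rho$. A forest $F$ on $\mathcal I$ is a collection of vertex-disjoint undirected trees $T^1,\dots,T^R$ whose vertex sets partition $\mathcal I$; a seeding $s=(s^1,\dots,s^R)$ chooses exactly one vertex $s^r$ of each $T^r$. The pair $\mathcal T=(F,s)$ is an information tree: orient each $T^r$ away from $s^r$ and add a root $0$ (the planner) with an arc $0\to s^r$ for each $r$. If $\theta=b$ no messages are sent. If $\theta=g$ the planner sends a message along each arc $0\to s^r$, and every agent who receives a message forwards it along every arc leaving her. Each transmission along an arc is lost independently with probability $\varepsilon$. Agent $i$ observes only $x_i\in\{y,n\}$ (received / not). $\Omega=\{g,b\}\times\{y,n\}^I$, $\mathbb P_{\mathcal T}$ the induced probability. $G=\{\theta=g\}$, $Y_i=\{x_i=y\}$, $N_i=\Omega\setminus Y_i$, $Y^*=\bigcap_iY_i$. $B^p_i(E)=\{\omega:\mathbb P_{\mathcal T}[E\mid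 x_i=x_i(\omega)]\ge p\}$, $B^p(E)=\bigcap_iB^p_i(E)$, $B^{p,0}(E)=E$, $B^{p,\ell}(E)=B^p(B^{p,\ell-1}(E))$, $C^p_{\mathcal T}(E)=\bigcap_{\ell\ge1}B^{p,\ell}(E)$. *)

theory Defs
  imports Main "HOL-Library.FuncSet" Complex_Main
begin

text \<open>Agents are 1..I; vertex 0 is the planner.  An information tree (F,s) is represented
by the oriented structure it induces: every agent i has a unique parent par i (the tail of
the unique arc entering i), which is 0 exactly when i is a seed, and every agent is reached
from the root 0 by following parents.\<close>

definition info_tree :: "nat \<Rightarrow> (nat \<Rightarrow> nat) \<Rightarrow> bool" where
  "info_tree I par \<longleftrightarrow>
     (\<forall>i\<in>{1..I}. par i \<in> {0..I} \<and> (\<exists>k. (par ^^ k) i = 0))"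

text \<open>States: (theta, x) with theta = True meaning g, and x i = True meaning x_i = y.
Messages only exist for agents 1..I, so x is False outside {1..I}.\<close>

type_synonym state = "bool \<times> (nat \<Rightarrow> bool)"

definition Omega :: "nat \<Rightarrow> state set" where
  "Omega I = {(t, x). \<forall>i. i \<notin> {1..I} \<longrightarrow> \<not> x i}"

text \<open>Probability of an individual state: in state g each arc into agent i is
independently kept with probability 1-eps; i receives iff her parent received (the
planner always sends) and the arc is kept.  In state b nobody receives.\<close>

definition weight :: "nat \<Rightarrow> real \<Rightarrow> real \<Rightarrow> (nat \<Rightarrow> nat) \<Rightarrow> state \<Rightarrow> real" where
  "weight I rho eps par \<omega> =
     (case \<omega> of (t, x) \<Rightarrow>
        if t then rho * (\<Prod>i\<in>{1..I}.
                  (if par i = 0 \<or> x (par i)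
                   then (if x i then 1 - eps else eps)
                   else (if x i then 0 else 1)))
        else (1 - rho) * (if (\<forall>i\<in>{1..I}. \<not> x i) then 1 else 0))"

definition Pr :: "nat \<Rightarrow> real \<Rightarrow> real \<Rightarrow> (nat \<Rightarrow> nat) \<Rightarrow> state set \<Rightarrow> real" where
  "Pr I rho eps par E = (\<Sum>\<omega>\<in>E \<inter> Omega I. weight I rho eps par \<omega>)"

definition belief_i :: "nat \<Rightarrow> real \<Rightarrow> real \<Rightarrow> (nat \<Rightarrow> nat) \<Rightarrow> real \<Rightarrow> nat \<Rightarrow> state set \<Rightarrow> state set" where
  "belief_i I rho eps par p i E =
     {\<omega> \<in> Omega I.
        Pr I rho eps par (E \<inter> {\<omega>'. snd \<omega>' i = snd \<omega> i})
          / Pr I rho eps par {\<omega>'. snd \<omega>' i = snd \<omega> i} \<ge> p}"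

definition belief :: "nat \<Rightarrow> real \<Rightarrow> real \<Rightarrow> (nat \<Rightarrow> nat) \<Rightarrow> real \<Rightarrow> state set \<Rightarrow> state set" where
  "belief I rho eps par p E = Omega I \<inter> (\<Inter>i\<in>{1..I}. belief_i I rho eps par p i E)"

definition common_belief :: "nat \<Rightarrow> real \<Rightarrow> real \<Rightarrow> (nat \<Rightarrow> nat) \<Rightarrow> real \<Rightarrow> state set \<Rightarrow> state set" where
  "common_belief I rho eps par p E =
     (\<Inter>l\<in>{1..}. (belief I rho eps par p ^^ l) E)"

definition eventG :: "nat \<Rightarrow> state set" where
  "eventG I = {\<omega> \<in> Omega I. fst \<omega>}"

definition q1 :: "real \<Rightarrow> real \<Rightarrow> real" where
  "q1 rho eps = rho * eps / (1 - rho * (1 - eps))"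

definition q2 :: "nat \<Rightarrow> real \<Rightarrow> real" where
  "q2 I eps = (1 - eps) ^ (I - 1)"

end

theory Submission
  imports Defs
begin

text \<open>Under \<open>G\<close> the message profile is a Markov process along the tree: an agent receives
with probability \<open>1 - eps\<close> if her parent did and never otherwise.  An agent who receives is
certain of \<open>G\<close>; an agent who does not receive has posterior at least \<open>q1\<close>, with equality
for seeds.  Hence for \<open>p \<le> q1\<close> every event containing \<open>G\<close> is \<open>p\<close>-believed everywhere.
For \<open>p > q1\<close> a non-receiving seed cannot \<open>p\<close>-believe an event that excludes the silent
\<open>b\<close>-state, and a non-receiving child cannot \<open>p\<close>-believe an event on which her parent
received; so by induction on depth, the \<open>l\<close>-th iterated belief lies in \<open>Y\<^sub>i\<close> for every
agent of depth at most \<open>l\<close>, and eventually in \<open>Y\<^sup>*\<close>.  A seed who received assigns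
\<open>Y\<^sup>*\<close> probability at most \<open>(1 - eps)\<^bsup>I-1\<^esup> = q2 \<le> q1 < p\<close>, so the next
iterate is empty.  Finally \<open>q1\<close> increases and \<open>q2\<close> decreases in \<open>eps\<close>, so \<open>eps \<ge> epsbar\<close>
gives \<open>q2 \<le> q1\<close>.\<close>

definition subset_indicators :: "nat set \<Rightarrow> (nat \<Rightarrow> bool) set" where
  "subset_indicators A = {x. \<forall>i. i \<notin> A \<longrightarrow> \<not> x i}"

lemma subset_indicators_eq_image: "subset_indicators A = (\<lambda>S i. i \<in> S) ` Pow A"
proof (intro equalityI subsetI)
  fix x assume "x \<in> subset_indicators A"
  then have "{i. x i} \<in> Pow A" and "x = (\<lambda>i. i \<in> {i. x i})"
    by (auto simp: subset_indicators_def)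
  then show "x \<in> (\<lambda>S i. i \<in> S) ` Pow A" by blast
qed (auto simp: subset_indicators_def)

lemma finite_subset_indicators: "finite A \<Longrightarrow> finite (subset_indicators A)"
  by (simp add: subset_indicators_eq_image)

lemma subset_indicators_empty: "subset_indicators {} = {\<lambda>_. False}"
  by (auto simp: subset_indicators_def)

lemma sum_subset_indicators_insert:
  assumes "m \<notin> A" "finite A"
  shows "(\<Sum>x\<in>subset_indicators (insert m A). g x)
       = (\<Sum>x\<in>subset_indicators A. g x + g (x(m := True)))"
proof -
  let ?ind = "\<lambda>S i. i \<in> S"
  have inj: "inj_on ?ind X" for X :: "nat set set"
    by (rule inj_onI) (auto simp: fun_eq_iff)
  have "(\<Sum>x\<in>subset_indicators (insert m A). g x) = (\<Sum>S\<in>Pow (insert m A). g (?ind S))"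
    by (simp add: subset_indicators_eq_image sum.reindex inj)
  also have "\<dots> = (\<Sum>S\<in>Pow A. g (?ind S)) + (\<Sum>S\<in>insert m ` Pow A. g (?ind S))"
    unfolding Pow_insert using assms by (intro sum.union_disjoint) auto
  also have "(\<Sum>S\<in>insert m ` Pow A. g (?ind S)) = (\<Sum>S\<in>Pow A. g ((?ind S)(m := True)))"
    using assms by (subst sum.reindex) (auto simp: inj_on_def fun_eq_iff intro!: sum.cong arg_cong[where f = g])
  also have "(\<Sum>S\<in>Pow A. g (?ind S)) + \<dots> = (\<Sum>x\<in>subset_indicators A. g x + g (x(m := True)))"
    by (simp add: subset_indicators_eq_image sum.reindex inj sum.distrib)
  finally show ?thesis .
qed

definition arc_factor :: "real \<Rightarrow> (nat \<Rightarrow> nat) \<Rightarrow> nat \<Rightarrow> (nat \<Rightarrow> bool) \<Rightarrow> real" where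
  "arc_factor eps par i x =
     (if par i = 0 \<or> x (par i) then (if x i then 1 - eps else eps) else (if x i then 0 else 1))"

definition tree_weight :: "real \<Rightarrow> (nat \<Rightarrow> nat) \<Rightarrow> nat set \<Rightarrow> (nat \<Rightarrow> bool) \<Rightarrow> real" where
  "tree_weight eps par A x = (\<Prod>i\<in>A. arc_factor eps par i x)"

lemma tree_weight_nonneg: "0 \<le> eps \<Longrightarrow> eps \<le> 1 \<Longrightarrow> 0 \<le> tree_weight eps par A x"
  unfolding tree_weight_def arc_factor_def by (intro prod_nonneg) auto

lemma arc_factor_sum_eq_one:
  "\<not> x m \<Longrightarrow> par m \<noteq> m \<Longrightarrow> arc_factor eps par m x + arc_factor eps par m (x(m := True)) = 1"
  by (simp add: arc_factor_def)

lemma sum_tree_weight_remove_leaf: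
  assumes "finite A" "m \<in> A" "\<forall>c\<in>A. par c \<noteq> m"
  shows "(\<Sum>x\<in>subset_indicators A. tree_weight eps par A x * h x) =
     (\<Sum>x\<in>subset_indicators (A - {m}). tree_weight eps par (A - {m}) x *
         (arc_factor eps par m x * h x + arc_factor eps par m (x(m := True)) * h (x(m := True))))"
proof -
  have split: "tree_weight eps par A x = arc_factor eps par m x * tree_weight eps par (A - {m}) x" for x
    unfolding tree_weight_def using assms(1,2) by (simp add: prod.remove)
  have "tree_weight eps par (A - {m}) (x(m := True)) = tree_weight eps par (A - {m}) x" for x
    unfolding tree_weight_def using assms(3) by (intro prod.cong) (auto simp: arc_factor_def)
  moreover have "insert m (A - {m}) = A" using assms(2) by blast
  ultimately show ?thesis
    using sum_subset_indicators_insert[of m "A - {m}" "\<lambda>x. tree_weight eps par A x * h x"] assms(1)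
    by (simp add: split algebra_simps)
qed

lemma q1_eq: "q1 rho eps = rho * eps / (rho * eps + (1 - rho))"
  by (simp add: q1_def algebra_simps)

lemma q1_mono:
  fixes rho a b :: real
  assumes "0 < rho" "rho < 1" "0 \<le> a" "a \<le> b"
  shows "q1 rho a \<le> q1 rho b"
proof -
  have "0 < rho * a + (1 - rho)" "0 < rho * b + (1 - rho)"
    using assms by (simp_all add: add_nonneg_pos)
  moreover have "rho * a * (rho * b + (1 - rho)) \<le> rho * b * (rho * a + (1 - rho))"
  proof -
    have "rho * b * (rho * a + (1 - rho)) - rho * a * (rho * b + (1 - rho)) = rho * (1 - rho) * (b - a)"
      by (simp add: algebra_simps)
    moreover have "0 \<le> rho * (1 - rho) * (b - a)" using assms by simp
    ultimately show ?thesis by linarith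
  qed
  ultimately show ?thesis by (simp add: q1_eq divide_simps)
qed

lemma q1_le_one: "0 < rho \<Longrightarrow> rho < 1 \<Longrightarrow> 0 \<le> eps \<Longrightarrow> q1 rho eps \<le> 1"
  by (simp add: q1_eq add_nonneg_pos)

lemma child_posterior_le_q1:
  fixes rho eps a :: real
  assumes "0 < rho" "rho < 1" "0 \<le> eps" "eps \<le> 1" "0 \<le> a" "a \<le> 1"
  shows "rho * eps * a / (rho * (1 - (1 - eps) * a) + (1 - rho)) \<le> q1 rho eps"
proof -
  have "(1 - eps) * a \<le> 1" using assms by (simp add: mult_le_one)
  then have "0 < rho * (1 - (1 - eps) * a) + (1 - rho)"
    using assms by (simp add: add_nonneg_pos)
  moreover have "0 < rho * eps + (1 - rho)" using assms by (simp add: add_nonneg_pos)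
  moreover have "rho * eps * a * (rho * eps + (1 - rho)) \<le> rho * eps * (rho * (1 - (1 - eps) * a) + (1 - rho))"
  proof -
    have "rho * eps * (rho * (1 - (1 - eps) * a) + (1 - rho)) - rho * eps * a * (rho * eps + (1 - rho))
        = rho * eps * (1 - a)"
      by (simp add: algebra_simps)
    moreover have "0 \<le> rho * eps * (1 - a)" using assms by simp
    ultimately show ?thesis by linarith
  qed
  ultimately show ?thesis by (simp add: q1_eq divide_simps)
qed

lemma q2_le_q1:
  assumes "0 < rho" "rho < 1" "0 < epsbar" "epsbar \<le> eps" "eps \<le> 1"
    and "q1 rho epsbar = q2 I epsbar"
  shows "q2 I eps \<le> q1 rho eps"
proof -
  have "q2 I eps \<le> q2 I epsbar" unfolding q2_def using assms by (intro power_mono) auto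
  also have "\<dots> = q1 rho epsbar" using assms(6) by simp
  also have "\<dots> \<le> q1 rho eps" using assms by (intro q1_mono) auto
  finally show ?thesis .
qed

definition depth :: "(nat \<Rightarrow> nat) \<Rightarrow> nat \<Rightarrow> nat" where
  "depth par i = (LEAST k. (par ^^ k) i = 0)"

definition parent_closed :: "nat \<Rightarrow> (nat \<Rightarrow> nat) \<Rightarrow> nat set \<Rightarrow> bool" where
  "parent_closed I par A \<longleftrightarrow> A \<subseteq> {1..I} \<and> (\<forall>i\<in>A. par i = 0 \<or> par i \<in> A)"

locale information_tree =
  fixes I :: nat and par :: "nat \<Rightarrow> nat"
  assumes tree: "info_tree I par"
begin

lemma parent_range: "i \<in> {1..I} \<Longrightarrow> par i \<in> {0..I}"
  using tree unfolding info_tree_def by blast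

lemma depth_reaches_root:
  assumes "i \<in> {1..I}"
  shows "(par ^^ depth par i) i = 0"
proof -
  obtain k where "(par ^^ k) i = 0" using tree assms unfolding info_tree_def by blast
  then show ?thesis unfolding depth_def by (rule LeastI)
qed

lemma depth_parent_less:
  assumes i: "i \<in> {1..I}" and "par i \<noteq> 0"
  shows "depth par (par i) < depth par i"
proof -
  have root: "(par ^^ depth par i) i = 0" using depth_reaches_root[OF i] .
  then obtain n where n: "depth par i = Suc n"
    using i by (cases "depth par i") auto
  then have "(par ^^ n) (par i) = 0"
    using root by (simp add: funpow_Suc_right del: funpow.simps)
  then have "depth par (par i) \<le> n" unfolding depth_def by (rule Least_le)
  with n show ?thesis by simp
qed

lemma seed_exists:
  assumes "1 \<le> I"
  obtains s where "s \<in> {1..I}" "par s = 0"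
proof -
  obtain s where s: "s \<in> {1..I}" and least: "\<forall>k. k \<in> {1..I} \<longrightarrow> depth par s \<le> depth par k"
    using ex_has_least_nat[of "\<lambda>k. k \<in> {1..I}" 1 "depth par"] assms by auto
  have "par s = 0"
  proof (rule ccontr)
    assume "par s \<noteq> 0"
    then have "par s \<in> {1..I}" and "depth par (par s) < depth par s"
      using parent_range[OF s] depth_parent_less[OF s] by auto
    with least show False by fastforce
  qed
  with s that show ?thesis by blast
qed

lemma parent_closed_agents: "parent_closed I par {1..I}"
  unfolding parent_closed_def using parent_range by auto

lemma sum_tree_weight_marginal:
  assumes "parent_closed I par A" "parent_closed I par B" "B \<subseteq> A"
    and "\<And>x y. \<forall>k\<in>B. x k = y k \<Longrightarrow> h x = h y"
  shows "(\<Sum>x\<in>subset_indicators A. tree_weight eps par A x * h x)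
       = (\<Sum>x\<in>subset_indicators B. tree_weight eps par B x * h x)"
  using assms(1,3)
proof (induction "card (A - B)" arbitrary: A)
  case 0
  then have "A = B"
    using finite_subset[of A "{1..I}"] unfolding parent_closed_def by auto
  then show ?case by simp
next
  case (Suc n)
  have finA: "finite A"
    using Suc.prems(1) finite_subset[of A "{1..I}"] unfolding parent_closed_def by auto
  then have fin: "finite (A - B)" by simp
  moreover have "A - B \<noteq> {}" using Suc.hyps(2) by (metis card.empty nat.distinct(1))
  ultimately have "Max (depth par ` (A - B)) \<in> depth par ` (A - B)" by simp
  then obtain m where m: "m \<in> A - B" "depth par m = Max (depth par ` (A - B))" by auto
  \<comment> \<open>a deepest agent of \<open>A - B\<close> is a leaf of \<open>A\<close>\<close>
  have deepest: "depth par c \<le> depth par m" if "c \<in> A - B" for c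
    using Max_ge[of "depth par ` (A - B)"] fin that m(2) by auto
  have m_agent: "m \<in> {1..I}" using m Suc.prems(1) unfolding parent_closed_def by auto
  have leaf: "\<forall>c\<in>A. par c \<noteq> m"
  proof (intro ballI notI)
    fix c assume c: "c \<in> A" "par c = m"
    have "c \<notin> B" using c m assms(2) m_agent unfolding parent_closed_def by auto
    moreover have "c \<in> {1..I}" using c Suc.prems(1) unfolding parent_closed_def by auto
    ultimately show False
      using deepest depth_parent_less c m_agent by fastforce
  qed
  have "(\<Sum>x\<in>subset_indicators A. tree_weight eps par A x * h x)
      = (\<Sum>x\<in>subset_indicators (A - {m}). tree_weight eps par (A - {m}) x * h x)"
  proof -
    have "(\<Sum>x\<in>subset_indicators A. tree_weight eps par A x * h x) =
       (\<Sum>x\<in>subset_indicators (A - {m}). tree_weight eps par (A - {m}) x *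
         (arc_factor eps par m x * h x + arc_factor eps par m (x(m := True)) * h (x(m := True))))"
      using finA m leaf by (intro sum_tree_weight_remove_leaf) auto
    also have "\<dots> = (\<Sum>x\<in>subset_indicators (A - {m}). tree_weight eps par (A - {m}) x * h x)"
    proof (rule sum.cong)
      fix x assume "x \<in> subset_indicators (A - {m})"
      then have "\<not> x m" by (simp add: subset_indicators_def)
      moreover have "h (x(m := True)) = h x" using assms(4) m by auto
      moreover have "par m \<noteq> m" using leaf m by blast
      ultimately show "tree_weight eps par (A - {m}) x *
          (arc_factor eps par m x * h x + arc_factor eps par m (x(m := True)) * h (x(m := True)))
        = tree_weight eps par (A - {m}) x * h x"
        using arc_factor_sum_eq_one[of x m par eps] by (simp add: distrib_right[symmetric])
    qed simp
    finally show ?thesis .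
  qed
  also have "\<dots> = (\<Sum>x\<in>subset_indicators B. tree_weight eps par B x * h x)"
  proof (rule Suc.hyps(1))
    show "n = card (A - {m} - B)" using Suc.hyps(2) m fin by (simp add: Diff_insert2[symmetric])
    show "parent_closed I par (A - {m})" using Suc.prems(1) leaf unfolding parent_closed_def by auto
    show "B \<subseteq> A - {m}" using Suc.prems(2) m by blast
  qed
  finally show ?case .
qed

lemma sum_tree_weight_eq_one:
  assumes "parent_closed I par A"
  shows "(\<Sum>x\<in>subset_indicators A. tree_weight eps par A x) = 1"
  using sum_tree_weight_marginal[OF assms, of "{}" "\<lambda>_. 1" eps]
  by (simp add: parent_closed_def subset_indicators_empty tree_weight_def)

definition shallower :: "nat \<Rightarrow> nat set" where
  "shallower i = {k \<in> {1..I}. depth par k < depth par i}"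

lemma parent_in_shallower: "i \<in> {1..I} \<Longrightarrow> par i \<noteq> 0 \<Longrightarrow> par i \<in> shallower i"
  using parent_range depth_parent_less by (fastforce simp: shallower_def)

lemma parent_closed_shallower: "parent_closed I par (shallower i)"
  unfolding parent_closed_def using parent_in_shallower by (fastforce simp: shallower_def)

lemma parent_closed_insert_shallower:
  "i \<in> {1..I} \<Longrightarrow> parent_closed I par (insert i (shallower i))"
  using parent_closed_shallower[of i] parent_in_shallower[of i] unfolding parent_closed_def by auto

lemma no_child_in_insert_shallower:
  assumes "i \<in> {1..I}"
  shows "\<forall>c\<in>insert i (shallower i). par c \<noteq> i"
  using assms depth_parent_less by (fastforce simp: shallower_def)

end

locale information_model = information_tree +
  fixes rho eps :: real
  assumes rho_pos: "0 < rho" and rho_less_one: "rho < 1"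
    and eps_pos: "0 < eps" and eps_less_one: "eps < 1"
begin

abbreviation profiles :: "(nat \<Rightarrow> bool) set" where
  "profiles \<equiv> subset_indicators {1..I}"

text \<open>\<open>probG P\<close> is the probability of \<open>P\<close> given \<open>G\<close>: the weight of \<open>(True, x)\<close> is
\<open>rho * tree_weight eps par {1..I} x\<close>.\<close>

definition probG :: "((nat \<Rightarrow> bool) \<Rightarrow> bool) \<Rightarrow> real" where
  "probG P = (\<Sum>x\<in>profiles. tree_weight eps par {1..I} x * of_bool (P x))"

lemma probG_nonneg: "0 \<le> probG P"
  unfolding probG_def using eps_pos eps_less_one by (intro sum_nonneg) (simp add: tree_weight_nonneg)

lemma probG_mono: "(\<And>x. x \<in> profiles \<Longrightarrow> P x \<Longrightarrow> Q x) \<Longrightarrow> probG P \<le> probG Q"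
  unfolding probG_def using eps_pos eps_less_one
  by (intro sum_mono mult_left_mono) (auto simp: tree_weight_nonneg)

lemma probG_cong: "(\<And>x. x \<in> profiles \<Longrightarrow> P x = Q x) \<Longrightarrow> probG P = probG Q"
  unfolding probG_def by (intro sum.cong) auto

lemma probG_split: "probG P = probG (\<lambda>x. P x \<and> Q x) + probG (\<lambda>x. P x \<and> \<not> Q x)"
  unfolding probG_def sum.distrib[symmetric] by (intro sum.cong) (auto simp: distrib_left[symmetric])

lemma probG_True: "probG (\<lambda>_. True) = 1"
  using sum_tree_weight_eq_one[OF parent_closed_agents] by (simp add: probG_def)

lemma probG_not: "probG (\<lambda>x. \<not> P x) = 1 - probG P"
  using probG_split[of "\<lambda>_. True" P] probG_True by simp

lemma probG_le_one: "probG P \<le> 1"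
  using probG_mono[of P "\<lambda>_. True"] probG_True by simp

lemma probG_and_received:
  assumes i: "i \<in> {1..I}"
    and Q: "\<And>x y. \<forall>k\<in>shallower i. x k = y k \<Longrightarrow> Q x = Q y"
    and parent: "par i = 0 \<or> (\<forall>x. Q x \<longrightarrow> x (par i))"
  shows "probG (\<lambda>x. Q x \<and> x i) = (1 - eps) * probG Q"
proof -
  let ?S = "shallower i" and ?w = "tree_weight eps par"
  have i_notin: "i \<notin> ?S" by (simp add: shallower_def)
  have marginal: "probG P = (\<Sum>x\<in>subset_indicators A. ?w A x * of_bool (P x))"
    if "parent_closed I par A" "\<And>x y. \<forall>k\<in>A. x k = y k \<Longrightarrow> P x = P y" for A P
    unfolding probG_def using that
    by (intro sum_tree_weight_marginal parent_closed_agents) (auto simp: parent_closed_def)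
  have "probG (\<lambda>x. Q x \<and> x i)
      = (\<Sum>x\<in>subset_indicators (insert i ?S). ?w (insert i ?S) x * of_bool (Q x \<and> x i))"
    using i parent_closed_insert_shallower[OF i] Q by (intro marginal) (auto simp: shallower_def)
  also have "\<dots> = (\<Sum>x\<in>subset_indicators ?S. ?w ?S x *
      (arc_factor eps par i x * of_bool (Q x \<and> x i)
       + arc_factor eps par i (x(i := True)) * of_bool (Q (x(i := True)) \<and> True)))"
    using sum_tree_weight_remove_leaf[of "insert i ?S" i par]
      no_child_in_insert_shallower[OF i] i_notin
    by (simp add: shallower_def)
  also have "\<dots> = (\<Sum>x\<in>subset_indicators ?S. ?w ?S x * ((1 - eps) * of_bool (Q x)))"
  proof (intro sum.cong refl arg_cong[where f = "\<lambda>t. ?w ?S _ * t"])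
    fix x assume "x \<in> subset_indicators ?S"
    then have "\<not> x i" using i_notin by (simp add: subset_indicators_def)
    moreover have "Q (x(i := True)) = Q x" using Q i_notin by auto
    moreover have "par i \<noteq> i" using no_child_in_insert_shallower[OF i] by blast
    ultimately show "arc_factor eps par i x * of_bool (Q x \<and> x i)
       + arc_factor eps par i (x(i := True)) * of_bool (Q (x(i := True)) \<and> True)
       = (1 - eps) * of_bool (Q x)"
      using parent by (auto simp: arc_factor_def)
  qed
  also have "\<dots> = (1 - eps) * probG Q"
    using parent_closed_shallower Q
    by (subst marginal[of ?S Q]) (auto simp: shallower_def sum_distrib_left algebra_simps)
  finally show ?thesis .
qed

lemma probG_received_seed: "i \<in> {1..I} \<Longrightarrow> par i = 0 \<Longrightarrow> probG (\<lambda>x. x i) = 1 - eps"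
  using probG_and_received[of i "\<lambda>_. True"] probG_True by simp

lemma probG_received_without_parent:
  assumes "i \<in> {1..I}" "par i \<noteq> 0"
  shows "probG (\<lambda>x. x i \<and> \<not> x (par i)) = 0"
  unfolding probG_def tree_weight_def
  using assms by (intro sum.neutral ballI) (auto simp: arc_factor_def intro!: prod_zero bexI[of _ i])

lemma probG_parent_and_received:
  assumes i: "i \<in> {1..I}" and "par i \<noteq> 0"
  shows "probG (\<lambda>x. x (par i) \<and> x i) = (1 - eps) * probG (\<lambda>x. x (par i))"
  using assms parent_in_shallower[OF i] by (intro probG_and_received) auto

lemma probG_received_child:
  assumes "i \<in> {1..I}" "par i \<noteq> 0"
  shows "probG (\<lambda>x. x i) = (1 - eps) * probG (\<lambda>x. x (par i))"
proof -
  have "probG (\<lambda>x. x i) = probG (\<lambda>x. x i \<and> x (par i)) + probG (\<lambda>x. x i \<and> \<not> x (par i))"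
    by (rule probG_split)
  also have "probG (\<lambda>x. x i \<and> x (par i)) = probG (\<lambda>x. x (par i) \<and> x i)"
    by (intro probG_cong) auto
  finally show ?thesis
    using assms probG_received_without_parent probG_parent_and_received by simp
qed

lemma probG_parent_and_not_received:
  assumes "i \<in> {1..I}" "par i \<noteq> 0"
  shows "probG (\<lambda>x. x (par i) \<and> \<not> x i) = eps * probG (\<lambda>x. x (par i))"
  using probG_split[of "\<lambda>x. x (par i)" "\<lambda>x. x i"] probG_parent_and_received[OF assms]
  by (simp add: algebra_simps)

lemma probG_received_le: "i \<in> {1..I} \<Longrightarrow> probG (\<lambda>x. x i) \<le> 1 - eps"
  using probG_received_seed probG_received_child probG_le_one eps_less_one
  by (cases "par i = 0") (auto simp: mult_left_le)

lemma all_received_profile: "(\<lambda>k. k \<in> {1..I}) \<in> profiles"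
  by (simp add: subset_indicators_def)

lemma tree_weight_all_received: "tree_weight eps par {1..I} (\<lambda>k. k \<in> {1..I}) = (1 - eps) ^ I"
proof -
  have "(\<Prod>i\<in>{1..I}. arc_factor eps par i (\<lambda>k. k \<in> {1..I})) = (\<Prod>i\<in>{1..I}. 1 - eps)"
    using parent_range by (intro prod.cong) (auto simp: arc_factor_def)
  then show ?thesis by (simp add: tree_weight_def)
qed

lemma probG_le_all_received:
  assumes "\<And>x. x \<in> profiles \<Longrightarrow> P x \<Longrightarrow> \<forall>k\<in>{1..I}. x k"
  shows "probG P \<le> (1 - eps) ^ I"
proof -
  let ?all = "\<lambda>k. k \<in> {1..I}" and ?w = "tree_weight eps par {1..I}"
  have "probG P \<le> (\<Sum>x\<in>profiles. if x = ?all then ?w x else 0)"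
    unfolding probG_def
  proof (intro sum_mono)
    fix x assume "x \<in> profiles"
    then show "?w x * of_bool (P x) \<le> (if x = ?all then ?w x else 0)"
      using assms[of x] eps_pos eps_less_one
      by (auto simp: subset_indicators_def fun_eq_iff tree_weight_nonneg)
  qed
  also have "\<dots> = (1 - eps) ^ I"
    using all_received_profile tree_weight_all_received
    by (simp add: finite_subset_indicators sum.delta')
  finally show ?thesis .
qed

lemma probG_ge_all_received:
  assumes "P (\<lambda>k. k \<in> {1..I})"
  shows "(1 - eps) ^ I \<le> probG P"
proof -
  let ?w = "tree_weight eps par {1..I}"
  have "?w (\<lambda>k. k \<in> {1..I}) * of_bool (P (\<lambda>k. k \<in> {1..I})) \<le> probG P"
    unfolding probG_def using all_received_profile eps_pos eps_less_one
    by (intro member_le_sum) (auto simp: finite_subset_indicators tree_weight_nonneg)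
  with assms show ?thesis by (simp only: tree_weight_all_received of_bool_eq mult_1_right)
qed

lemma probG_received_pos:
  assumes "i \<in> {1..I}"
  shows "0 < probG (\<lambda>x. x i)"
proof -
  have "0 < (1 - eps) ^ I" using eps_less_one by simp
  also have "\<dots> \<le> probG (\<lambda>x. x i)" using assms by (intro probG_ge_all_received) simp
  finally show ?thesis .
qed

abbreviation prob :: "state set \<Rightarrow> real" where
  "prob \<equiv> Pr I rho eps par"

lemma Omega_eq: "Omega I = Pair True ` profiles \<union> Pair False ` profiles"
  by (auto simp: Omega_def subset_indicators_def image_iff)

text \<open>\<open>(False, \<lambda>_. False)\<close> is the only \<open>b\<close>-state in \<open>Omega I\<close>.\<close>

lemma Pr_eq_probG:
  "prob E = rho * probG (\<lambda>x. (True, x) \<in> E) + (1 - rho) * of_bool ((False, \<lambda>_. False) \<in> E)"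
proof -
  let ?w = "weight I rho eps par"
  have fin: "finite profiles" by (simp add: finite_subset_indicators)
  have sum_Omega: "(\<Sum>\<omega>\<in>Omega I. f \<omega>) = (\<Sum>x\<in>profiles. f (True, x)) + (\<Sum>x\<in>profiles. f (False, x))"
    for f :: "state \<Rightarrow> real"
    unfolding Omega_eq using fin by (subst sum.union_disjoint) (auto simp: sum.reindex inj_on_def)
  have "finite (Omega I)" unfolding Omega_eq using fin by simp
  then have "prob E = (\<Sum>\<omega>\<in>Omega I. ?w \<omega> * of_bool (\<omega> \<in> E))"
    unfolding Pr_def by (simp add: Int_commute[of E] sum.inter_restrict of_bool_def if_distrib cong: if_cong)
  also have "\<dots> = (\<Sum>x\<in>profiles. ?w (True, x) * of_bool ((True, x) \<in> E))
                + (\<Sum>x\<in>profiles. ?w (False, x) * of_bool ((False, x) \<in> E))"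
    by (rule sum_Omega)
  also have "(\<Sum>x\<in>profiles. ?w (True, x) * of_bool ((True, x) \<in> E)) = rho * probG (\<lambda>x. (True, x) \<in> E)"
    unfolding probG_def sum_distrib_left
    by (intro sum.cong) (simp_all add: weight_def tree_weight_def arc_factor_def)
  also have "(\<Sum>x\<in>profiles. ?w (False, x) * of_bool ((False, x) \<in> E))
      = (\<Sum>x\<in>profiles. if x = (\<lambda>_. False) then (1 - rho) * of_bool ((False, \<lambda>_. False) \<in> E) else 0)"
  proof (intro sum.cong refl)
    fix x assume x: "x \<in> profiles"
    show "?w (False, x) * of_bool ((False, x) \<in> E)
        = (if x = (\<lambda>_. False) then (1 - rho) * of_bool ((False, \<lambda>_. False) \<in> E) else 0)"
    proof (cases "x = (\<lambda>_. False)")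
      case False
      then obtain i where "x i" by auto
      moreover from this x have "i \<in> {1..I}" by (auto simp: subset_indicators_def)
      ultimately show ?thesis using False by (auto simp: weight_def)
    qed (simp add: weight_def)
  qed
  also have "\<dots> = (1 - rho) * of_bool ((False, \<lambda>_. False) \<in> E)"
    using fin by (simp add: sum.delta' subset_indicators_def)
  finally show ?thesis .
qed

lemma Pr_observation: "prob {\<omega>. snd \<omega> i = v} = rho * probG (\<lambda>x. x i = v) + (1 - rho) * of_bool (\<not> v)"
  by (simp add: Pr_eq_probG)

lemma Pr_inter_observation:
  "prob (E \<inter> {\<omega>. snd \<omega> i = v}) =
     rho * probG (\<lambda>x. (True, x) \<in> E \<and> x i = v) + (1 - rho) * of_bool ((False, \<lambda>_. False) \<in> E \<and> \<not> v)"
  by (simp add: Pr_eq_probG)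

definition posterior :: "state set \<Rightarrow> nat \<Rightarrow> bool \<Rightarrow> real" where
  "posterior E i v = prob (E \<inter> {\<omega>. snd \<omega> i = v}) / prob {\<omega>. snd \<omega> i = v}"

lemma belief_i_iff:
  "\<omega> \<in> belief_i I rho eps par p i E \<longleftrightarrow> \<omega> \<in> Omega I \<and> p \<le> posterior E i (snd \<omega> i)"
  by (simp add: belief_i_def posterior_def)

lemma q1_le_posterior:
  assumes G: "eventG I \<subseteq> E" and i: "i \<in> {1..I}"
  shows "q1 rho eps \<le> posterior E i v"
proof -
  let ?s = "probG (\<lambda>x. x i = v)"
  have "probG (\<lambda>x. (True, x) \<in> E \<and> x i = v) = ?s"
    using G by (intro probG_cong) (auto simp: eventG_def Omega_def subset_indicators_def)
  then have num: "rho * ?s \<le> prob (E \<inter> {\<omega>. snd \<omega> i = v})"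
    using rho_less_one by (simp add: Pr_inter_observation)
  show ?thesis
  proof (cases v)
    case True
    then have "0 < rho * ?s" using probG_received_pos[OF i] rho_pos by simp
    then have "1 \<le> posterior E i v"
      using num True Pr_observation[of i v] by (simp add: posterior_def)
    then show ?thesis using q1_le_one[of rho eps] rho_pos rho_less_one eps_pos by linarith
  next
    case False
    then have s: "eps \<le> ?s" using probG_not[of "\<lambda>x. x i"] probG_received_le[OF i] by simp
    then have "q1 rho eps \<le> rho * ?s / (rho * ?s + (1 - rho))"
      using q1_mono[of rho eps ?s] rho_pos rho_less_one eps_pos by (simp add: q1_eq)
    also have "\<dots> \<le> posterior E i v"
      using num False s eps_pos rho_pos rho_less_one Pr_observation[of i v]
      by (simp add: posterior_def divide_right_mono add_nonneg_pos)
    finally show ?thesis .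
  qed
qed

lemma posterior_not_received_seed:
  assumes i: "i \<in> {1..I}" and seed: "par i = 0" and silent: "(False, \<lambda>_. False) \<notin> E"
  shows "posterior E i False \<le> q1 rho eps"
proof -
  have lost: "probG (\<lambda>x. x i = False) = eps"
    using probG_not[of "\<lambda>x. x i"] probG_received_seed[OF i seed] by simp
  have "probG (\<lambda>x. (True, x) \<in> E \<and> x i = False) \<le> probG (\<lambda>x. x i = False)"
    by (intro probG_mono) auto
  then have "probG (\<lambda>x. (True, x) \<in> E \<and> x i = False) \<le> eps" using lost by simp
  then have "prob (E \<inter> {\<omega>. snd \<omega> i = False}) \<le> rho * eps"
    using silent rho_pos Pr_inter_observation[of E i False] by simp
  then show ?thesis
    using lost rho_pos rho_less_one eps_pos Pr_observation[of i False]
    by (simp add: posterior_def q1_eq divide_right_mono add_nonneg_pos)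
qed

lemma posterior_not_received_child:
  assumes i: "i \<in> {1..I}" and child: "par i \<noteq> 0" and E: "E \<subseteq> {\<omega>. snd \<omega> (par i)}"
  shows "posterior E i False \<le> q1 rho eps"
proof -
  let ?a = "probG (\<lambda>x. x (par i))"
  have "probG (\<lambda>x. (True, x) \<in> E \<and> x i = False) \<le> probG (\<lambda>x. x (par i) \<and> \<not> x i)"
    using E by (intro probG_mono) auto
  then have "prob (E \<inter> {\<omega>. snd \<omega> i = False}) \<le> rho * eps * ?a"
    using E rho_pos probG_parent_and_not_received[OF i child] Pr_inter_observation[of E i False]
    by auto
  moreover have "prob {\<omega>. snd \<omega> i = False} = rho * (1 - (1 - eps) * ?a) + (1 - rho)"
    using probG_not[of "\<lambda>x. x i"] probG_received_child[OF i child] Pr_observation[of i False]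
    by simp
  moreover have "0 < rho * (1 - (1 - eps) * ?a) + (1 - rho)"
    using probG_le_one[of "\<lambda>x. x (par i)"] probG_nonneg[of "\<lambda>x. x (par i)"]
      rho_pos rho_less_one eps_pos eps_less_one
    by (simp add: add_nonneg_pos mult_le_one)
  ultimately have "posterior E i False \<le> rho * eps * ?a / (rho * (1 - (1 - eps) * ?a) + (1 - rho))"
    by (simp add: posterior_def divide_right_mono)
  also have "\<dots> \<le> q1 rho eps"
    using probG_le_one probG_nonneg rho_pos rho_less_one eps_pos eps_less_one
    by (intro child_posterior_le_q1) auto
  finally show ?thesis .
qed

lemma posterior_received_seed:
  assumes i: "i \<in> {1..I}" and seed: "par i = 0" and E: "E \<subseteq> {\<omega>. \<forall>k\<in>{1..I}. snd \<omega> k}"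
  shows "posterior E i True \<le> q2 I eps"
proof -
  have "probG (\<lambda>x. (True, x) \<in> E \<and> x i = True) \<le> (1 - eps) ^ I"
    using E by (intro probG_le_all_received) auto
  then have "prob (E \<inter> {\<omega>. snd \<omega> i = True}) \<le> rho * (1 - eps) ^ I"
    using rho_pos Pr_inter_observation[of E i True] by simp
  moreover have "prob {\<omega>. snd \<omega> i = True} = rho * (1 - eps)"
    using probG_received_seed[OF i seed] Pr_observation[of i True] by simp
  moreover have "(1 - eps) ^ I = (1 - eps) * (1 - eps) ^ (I - 1)"
    using i by (simp add: power_eq_if)
  ultimately show ?thesis
    using rho_pos eps_less_one by (simp add: posterior_def q2_def pos_divide_le_eq mult_ac)
qed

lemma belief_eq_Omega:
  assumes "p \<le> q1 rho eps" "eventG I \<subseteq> E"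
  shows "belief I rho eps par p E = Omega I"
proof -
  have "Omega I \<subseteq> belief_i I rho eps par p i E" if "i \<in> {1..I}" for i
    using order_trans[OF assms(1) q1_le_posterior[OF assms(2) that]] by (auto simp: belief_i_iff)
  then show ?thesis unfolding belief_def by blast
qed

lemma belief_subset_received_seed:
  assumes p: "q1 rho eps < p" and i: "i \<in> {1..I}" "par i = 0" and silent: "(False, \<lambda>_. False) \<notin> E"
  shows "belief I rho eps par p E \<subseteq> {\<omega>. snd \<omega> i}"
proof
  fix \<omega> assume "\<omega> \<in> belief I rho eps par p E"
  then have "p \<le> posterior E i (snd \<omega> i)" using i by (auto simp: belief_def belief_i_iff)
  then show "\<omega> \<in> {\<omega>. snd \<omega> i}"
    using posterior_not_received_seed[OF i silent] p by (cases "snd \<omega> i") auto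
qed

lemma belief_subset_received_child:
  assumes p: "q1 rho eps < p" and i: "i \<in> {1..I}" "par i \<noteq> 0" and E: "E \<subseteq> {\<omega>. snd \<omega> (par i)}"
  shows "belief I rho eps par p E \<subseteq> {\<omega>. snd \<omega> i}"
proof
  fix \<omega> assume "\<omega> \<in> belief I rho eps par p E"
  then have "p \<le> posterior E i (snd \<omega> i)" using i by (auto simp: belief_def belief_i_iff)
  then show "\<omega> \<in> {\<omega>. snd \<omega> i}"
    using posterior_not_received_child[OF i E] p by (cases "snd \<omega> i") auto
qed

lemma belief_empty:
  assumes p: "q1 rho eps < p" "q2 I eps < p" and I: "1 \<le> I"
    and E: "E \<subseteq> {\<omega>. \<forall>k\<in>{1..I}. snd \<omega> k}"
  shows "belief I rho eps par p E = {}"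
proof -
  obtain s where s: "s \<in> {1..I}" "par s = 0" using seed_exists[OF I] .
  have "(False, \<lambda>_. False) \<notin> E" using E s by auto
  then have "belief I rho eps par p E \<subseteq> {\<omega>. snd \<omega> s}"
    using belief_subset_received_seed[OF p(1) s] by blast
  moreover have "\<omega> \<in> belief I rho eps par p E \<Longrightarrow> p \<le> posterior E s (snd \<omega> s)" for \<omega>
    using s by (auto simp: belief_def belief_i_iff)
  ultimately show ?thesis
    using posterior_received_seed[OF s E] p(2) by fastforce
qed

lemma silent_notin_belief_iterate:
  assumes "q1 rho eps < p" "1 \<le> I"
  shows "(False, \<lambda>_. False) \<notin> (belief I rho eps par p ^^ l) (eventG I)"
proof (induction l)
  case 0
  then show ?case by (simp add: eventG_def)
next
  case (Suc l)
  obtain s where s: "s \<in> {1..I}" "par s = 0" using seed_exists[OF assms(2)] .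
  then show ?case using belief_subset_received_seed[OF assms(1) s Suc.IH] by auto
qed

lemma belief_iterate_subset_received:
  assumes p: "q1 rho eps < p" and I: "1 \<le> I"
  shows "i \<in> {1..I} \<Longrightarrow> depth par i \<le> l \<Longrightarrow> (belief I rho eps par p ^^ l) (eventG I) \<subseteq> {\<omega>. snd \<omega> i}"
proof (induction l arbitrary: i)
  case 0
  then show ?case using depth_reaches_root[of i] by simp
next
  case (Suc l)
  show ?case
  proof (cases "par i = 0")
    case True
    then show ?thesis
      using belief_subset_received_seed[OF p Suc.prems(1)] silent_notin_belief_iterate[OF p I] by simp
  next
    case False
    then have "par i \<in> {1..I}" "depth par (par i) \<le> l"
      using parent_range[OF Suc.prems(1)] depth_parent_less[OF Suc.prems(1)] Suc.prems(2) by auto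
    then show ?thesis
      using belief_subset_received_child[OF p Suc.prems(1) False] Suc.IH by simp
  qed
qed

theorem common_belief_G_eq_Omega:
  assumes "p \<le> q1 rho eps"
  shows "common_belief I rho eps par p (eventG I) = Omega I"
proof -
  have "(belief I rho eps par p ^^ Suc l) (eventG I) = Omega I" for l
  proof (induction l)
    case 0
    show ?case using belief_eq_Omega[OF assms subset_refl] by simp
  next
    case (Suc l)
    have "eventG I \<subseteq> Omega I" by (auto simp: eventG_def)
    then show ?case using belief_eq_Omega[OF assms] Suc.IH by simp
  qed
  then have "(belief I rho eps par p ^^ l) (eventG I) = Omega I" if "l \<in> {1..}" for l
    using that by (cases l) auto
  then show ?thesis unfolding common_belief_def by auto
qed

theorem common_belief_G_empty:
  assumes p: "q1 rho eps < p" and q: "q2 I eps \<le> q1 rho eps" and I: "1 \<le> I"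
  shows "common_belief I rho eps par p (eventG I) = {}"
proof -
  let ?B = "\<lambda>l. (belief I rho eps par p ^^ l) (eventG I)"
  define K where "K = Max (depth par ` {1..I})"
  have "depth par k \<le> K" if "k \<in> {1..I}" for k
    unfolding K_def using that by (intro Max_ge) auto
  then have "?B K \<subseteq> {\<omega>. \<forall>k\<in>{1..I}. snd \<omega> k}"
    using belief_iterate_subset_received[OF p I] by blast
  then have "?B (Suc K) = {}"
    using belief_empty[OF p _ I] p q by simp
  moreover have "common_belief I rho eps par p (eventG I) \<subseteq> ?B (Suc K)"
    unfolding common_belief_def by (intro INT_lower) simp
  ultimately show ?thesis by blast
qed

end

theorem proposition2:
  fixes I :: nat and rho eps epsbar :: real
  assumes "I \<ge> 2"
    and "0 < rho" "rho < 1"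
    and "0 < eps" "eps < 1"
    and "0 < epsbar" "epsbar < 1" "q1 rho epsbar = q2 I epsbar"
    and "eps \<ge> epsbar"
  shows "\<forall>par p. info_tree I par \<longrightarrow>
           (p \<le> q1 rho eps \<longrightarrow> common_belief I rho eps par p (eventG I) = Omega I) \<and>
           (p > q1 rho eps \<longrightarrow> common_belief I rho eps par p (eventG I) = {})"
proof (intro allI impI conjI)
  fix par and p :: real
  assume "info_tree I par"
  then interpret information_model I par rho eps
    using assms by unfold_locales auto
  have "q2 I eps \<le> q1 rho eps" using assms by (intro q2_le_q1) auto
  then show "p > q1 rho eps \<Longrightarrow> common_belief I rho eps par p (eventG I) = {}"
    using common_belief_G_empty assms(1) by simp
  show "p \<le> q1 rho eps \<Longrightarrow> common_belief I rho eps par p (eventG I) = Omega I"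
    by (rule common_belief_G_eq_Omega)
qed

end
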